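(* Let $G=(V,E)$ with $|V|\ge 3$, $N\ge3$, $\varepsilon\in(0,\frac1{N-1}]$ and $s_0\in S_{nc}$. Then for every $\gamma\in(0,1)$, every trigger strategies profile $\bar\sigma$ of $\Gamma_N(G|s_0,\gamma,\varepsilon)$ is nonpositional.
   Context: Setting. $G=(V,E)$ is a finite, simple, connected, undirected graph; $N\ge 3$ is an integer; $\gamma\in(0,1)$ and $\varepsilon\in[0,\frac1{N-1}]$ are parameters. There are $N$ tokens: cops $C_1,\dots,C_{N-1}$ (tokens $1,\dots,N-1$) and the robber $R$ (token $N$). A state is $s=(x^1,\dots,x^N,n)$ where $x^i\in V$ is the position of token $i$ and $n\in\{1,\dots,N\}$ is the token that moves next; $S^n$ denotes the set of states with token $n$ to move. A state is a capture state if $x^i=x^N$ for some $i\le N-1$; $S_{nc}$ is the set of noncapture states. In each turn exactly one token, the one to move, moves to a vertex of its closed neighbourhood (it may stay put); the order of moves is $C_1,C_2,\dots,C_{N-1},R,C_1,\dots$. Starting from an initial state $s_0\in S_{nc}$ at time $0$, the capture time is the first time $t$ at which a capture state occurs (infinite if never); after capture the game is over. Auxiliary games. For $m\in\{1,\dots,N\}$, $\Gamma_N^m(G|s_0,\gamma,\varepsilon)$ is the two-player zero-sum game in which player $P_m$ controls token $m$ and player $P_{-m}$ controls all other tokens, with the following payoff to $P_m$ ($P_{-m}$ receives its negative): $0$ if no capture ever occurs; if capture occurs at time $t$: for $m=N$, $-\gamma^t$; for $m\le N-1$, $\frac{1-\varepsilon}{K}\gamma^t$ if exactly $K\in\{1,\dots,N-2\}$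 cops, including $C_m$, are on the robber's vertex, $\frac{\varepsilon}{N-K-1}\gamma^t$ if exactly $K\in\{1,\dots,N-2\}$ cops, not including $C_m$, are on the robber's vertex, and $\frac{\gamma^t}{N-1}$ if all $N-1$ cops are on the robber's vertex. $\Gamma^N_N$ is the modified cops-and-robber (CR) game. A pure positional strategy for token $n$ maps each state in $S^n\cap S_{nc}$ to an allowed next vertex. Each $\Gamma^m_N$ has optimal pure positional strategies (optimal from every initial state). For $m,n\in\{1,\dots,N\}$, $\phi^n_m$ denotes the strategy of token $n$ in a chosen pair of optimal pure positional strategies of $\Gamma^m_N$ (so $\phi^m_m$ is $P_m$'s optimal strategy and $(\phi^n_m)_{n\ne m}$ is $P_{-m}$'s). $\widehat\Sigma^n$ is the set of pure positional strategies of token $n$ that are components of optimal strategy pairs of $\Gamma^N_N$ (CR-optimal strategies). Trigger strategies. Given a choice of $(\phi^n_m)_{n,m}$, the trigger strategies profile $\bar\sigma=(\bar\sigma^1,\dots,\bar\sigma^N)$ of the $N$-player SCAR game $\Gamma_N(G|s_0,\gamma,\varepsilon)$ (same board and moves; player $n$ controls token $n$) is: token $n$, at current state $s$, plays $\phi^n_n(s)$ as long as every other player $m$ has followed $\phi^m_m$, and plays $\phi^n_m(s)$ from the moment a player $m\neq n$ deviates from $\phi^m_m$. Different choices of the optimal strategies give different trigger strategies profiles. $\bar\sigma$ is called positional if for all $n,m\in\{1,\dots,N\}$ there is $\widehat\sigma^n\in\widehat\Sigma^n$ with $\phi^n_m(s)=\widehat\sigma^n(s)$ for every state $s\in S^n\cap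 S_{nc}$ reachable from $s_0$ by a finite sequence of legal moves passing only through noncapture states; otherwise $\bar\sigma$ is nonpositional. *)

theory Defs
  imports Main "HOL.Real"
begin

definition simple_graph :: "'v set \<Rightarrow> ('v \<Rightarrow> 'v \<Rightarrow> bool) \<Rightarrow> bool" where
  "simple_graph V E \<longleftrightarrow> finite V \<and> (\<forall>x y. E x y \<longrightarrow> x \<in> V \<and> y \<in> V)
     \<and> (\<forall>x y. E x y \<longrightarrow> E y x) \<and> (\<forall>x. \<not> E x x)"

definition connected_graph :: "'v set \<Rightarrow> ('v \<Rightarrow> 'v \<Rightarrow> bool) \<Rightarrow> bool" where
  "connected_graph V E \<longleftrightarrow> (\<forall>x\<in>V. \<forall>y\<in>V. E\<^sup>*\<^sup>* x y)"

definition cnbhd :: "'v set \<Rightarrow> ('v \<Rightarrow> 'v \<Rightarrow> bool) \<Rightarrow> 'v \<Rightarrow> 'v set" where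
  "cnbhd V E v = {w \<in> V. w = v \<or> E v w}"

text \<open>A state (x^1,...,x^N,n) is a list of N positions (token i at list index i-1)
 together with the token n to move. Tokens 1..N-1 are cops, token N the robber.\<close>

type_synonym 'v state = "'v list \<times> nat"
type_synonym 'v strat = "'v state \<Rightarrow> 'v"

definition pos :: "'v state \<Rightarrow> nat \<Rightarrow> 'v" where
  "pos s i = fst s ! (i - 1)"

definition mover :: "'v state \<Rightarrow> nat" where
  "mover s = snd s"

definition states :: "'v set \<Rightarrow> nat \<Rightarrow> 'v state set" where
  "states V N = {s. length (fst s) = N \<and> set (fst s) \<subseteq> V \<and> snd s \<in> {1..N}}"

definition captured_cops :: "nat \<Rightarrow> 'v state \<Rightarrow> nat set" where
  "captured_cops N s = {i \<in> {1..N-1}. pos s i = pos s N}"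

definition is_capture :: "nat \<Rightarrow> 'v state \<Rightarrow> bool" where
  "is_capture N s \<longleftrightarrow> (\<exists>i\<in>{1..N-1}. pos s i = pos s N)"

definition move :: "nat \<Rightarrow> 'v state \<Rightarrow> 'v \<Rightarrow> 'v state" where
  "move N s v = ((fst s)[mover s - 1 := v], mover s mod N + 1)"

definition legal_strat :: "'v set \<Rightarrow> ('v \<Rightarrow> 'v \<Rightarrow> bool) \<Rightarrow> nat \<Rightarrow> nat \<Rightarrow> 'v strat \<Rightarrow> bool" where
  "legal_strat V E N n \<sigma> \<longleftrightarrow>
     (\<forall>s\<in>states V N. mover s = n \<and> \<not> is_capture N s \<longrightarrow> \<sigma> s \<in> cnbhd V E (pos s n))"

definition legal_profile :: "'v set \<Rightarrow> ('v \<Rightarrow> 'v \<Rightarrow> bool) \<Rightarrow> nat \<Rightarrow> (nat \<Rightarrow> 'v strat) \<Rightarrow> bool" where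
  "legal_profile V E N \<pi> \<longleftrightarrow> (\<forall>n\<in>{1..N}. legal_strat V E N n (\<pi> n))"

fun play :: "nat \<Rightarrow> (nat \<Rightarrow> 'v strat) \<Rightarrow> 'v state \<Rightarrow> nat \<Rightarrow> 'v state" where
  "play N \<pi> s0 0 = s0"
| "play N \<pi> s0 (Suc t) = (let s = play N \<pi> s0 t in move N s (\<pi> (mover s) s))"

definition capture_reward :: "nat \<Rightarrow> real \<Rightarrow> nat \<Rightarrow> 'v state \<Rightarrow> real" where
  "capture_reward N \<epsilon> m s =
     (let K = card (captured_cops N s) in
      if m = N then -1
      else if K = N - 1 then 1 / real (N - 1)
      else if m \<in> captured_cops N s then (1 - \<epsilon>) / real K
      else \<epsilon> / real (N - K - 1))"

definition payoff :: "nat \<Rightarrow> real \<Rightarrow> real \<Rightarrow> nat \<Rightarrow> (nat \<Rightarrow> 'v strat) \<Rightarrow> 'v state \<Rightarrow> real" where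
  "payoff N \<gamma> \<epsilon> m \<pi> s0 =
     (if \<exists>t. is_capture N (play N \<pi> s0 t)
      then (let t = (LEAST t. is_capture N (play N \<pi> s0 t))
            in \<gamma> ^ t * capture_reward N \<epsilon> m (play N \<pi> s0 t))
      else 0)"

text \<open>A pair of optimal pure positional strategies of Gamma^m_N (optimal from every
 noncapture initial state): P_m controls token m, P_{-m} all other tokens and
 receives the negative payoff (saddle point condition).\<close>
definition optimal_pair :: "'v set \<Rightarrow> ('v \<Rightarrow> 'v \<Rightarrow> bool) \<Rightarrow> nat \<Rightarrow> real \<Rightarrow> real \<Rightarrow> nat
     \<Rightarrow> (nat \<Rightarrow> 'v strat) \<Rightarrow> bool" where
  "optimal_pair V E N \<gamma> \<epsilon> m \<pi> \<longleftrightarrow> legal_profile V E N \<pi> \<and>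
     (\<forall>s0\<in>states V N. \<not> is_capture N s0 \<longrightarrow>
        (\<forall>\<sigma>. legal_strat V E N m \<sigma> \<longrightarrow> payoff N \<gamma> \<epsilon> m (\<pi>(m := \<sigma>)) s0 \<le> payoff N \<gamma> \<epsilon> m \<pi> s0)
      \<and> (\<forall>\<rho>. legal_profile V E N \<rho> \<longrightarrow> payoff N \<gamma> \<epsilon> m \<pi> s0 \<le> payoff N \<gamma> \<epsilon> m (\<rho>(m := \<pi> m)) s0))"

definition CR_optimal :: "'v set \<Rightarrow> ('v \<Rightarrow> 'v \<Rightarrow> bool) \<Rightarrow> nat \<Rightarrow> real \<Rightarrow> real \<Rightarrow> nat \<Rightarrow> 'v strat set" where
  "CR_optimal V E N \<gamma> \<epsilon> n = {\<sigma>. \<exists>\<pi>. optimal_pair V E N \<gamma> \<epsilon> N \<pi> \<and> \<pi> n = \<sigma>}"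

text \<open>States reachable from s0 by legal moves passing only through noncapture states
 (the final state may be a capture state; it is excluded where used).\<close>
inductive_set reach_nc :: "'v set \<Rightarrow> ('v \<Rightarrow> 'v \<Rightarrow> bool) \<Rightarrow> nat \<Rightarrow> 'v state \<Rightarrow> 'v state set"
  for V E N s0 where
  start: "s0 \<in> reach_nc V E N s0"
| step: "s \<in> reach_nc V E N s0 \<Longrightarrow> \<not> is_capture N s \<Longrightarrow> v \<in> cnbhd V E (pos s (mover s))
          \<Longrightarrow> move N s v \<in> reach_nc V E N s0"

text \<open>phi n m is the strategy phi^n_m of token n in the chosen optimal pair of Gamma^m_N.
 The trigger strategies profile built from phi is positional iff the following holds.\<close>
definition trigger_positional :: "'v set \<Rightarrow> ('v \<Rightarrow> 'v \<Rightarrow> bool) \<Rightarrow> nat \<Rightarrow> real \<Rightarrow> real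
     \<Rightarrow> 'v state \<Rightarrow> (nat \<Rightarrow> nat \<Rightarrow> 'v strat) \<Rightarrow> bool" where
  "trigger_positional V E N \<gamma> \<epsilon> s0 \<phi> \<longleftrightarrow>
     (\<forall>n\<in>{1..N}. \<forall>m\<in>{1..N}. \<exists>\<sigma>\<in>CR_optimal V E N \<gamma> \<epsilon> n.
        \<forall>s\<in>reach_nc V E N s0. mover s = n \<and> \<not> is_capture N s \<longrightarrow> \<phi> n m s = \<sigma> s)"

end

theory Submission
  imports Defs
begin

text \<open>Choose a reachable noncapture position in which cop \<open>C\<^sub>2\<close> is next to the robber and the
  capture can be postponed: either a cop moving after \<open>C\<^sub>2\<close> is also next to the robber, or
  \<open>C\<^sub>2\<close> is alone on its vertex and the robber can step onto it. Such a position is reached by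
  walking \<open>C\<^sub>2\<close> towards the robber and, if \<open>C\<^sub>1\<close> shares its vertex, moving \<open>C\<^sub>1\<close> or the
  robber away, which is possible since the graph is connected with at least three vertices.
  In the modified cops-and-robber game every optimal cop strategy captures as soon as it can,
  because a later capture is discounted. In \<open>\<Gamma>\<^sup>1\<^sub>N\<close>, however, a capture by a single cop other
  than \<open>C\<^sub>1\<close> pays \<open>C\<^sub>1\<close> the discounted amount \<open>\<gamma>\<^sup>t \<epsilon> / (N - 2)\<close> with \<open>\<epsilon> > 0\<close>, so the
  opponents of \<open>C\<^sub>1\<close> postpone it: \<open>\<phi>\<^sup>2\<^sub>1\<close> does not capture there, and hence agrees with no
  CR-optimal strategy on the reachable states.\<close>

lemma pos_Pair [simp]: "pos (xs, k) i = xs ! (i - 1)"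
  by (simp add: pos_def)

lemma mover_Pair [simp]: "mover (xs, k) = k"
  by (simp add: mover_def)

lemma move_Pair [simp]: "move N (xs, k) v = (xs[k - 1 := v], k mod N + 1)"
  by (simp add: move_def)

lemma pos_in_vertices:
  assumes "s \<in> states V N" and "n \<in> {1..N}"
  shows "pos s n \<in> V"
  using assms nth_mem[of "n - 1" "fst s"] by (auto simp: states_def pos_def)

lemma is_capture_iff_captured_cops: "is_capture N s \<longleftrightarrow> captured_cops N s \<noteq> {}"
  by (auto simp: is_capture_def captured_cops_def)

section \<open>Reachable noncapture configurations\<close>

definition noncapture_config :: "'v set \<Rightarrow> nat \<Rightarrow> 'v list \<Rightarrow> bool" where
  "noncapture_config V N xs \<longleftrightarrow>
     length xs = N \<and> set xs \<subseteq> V \<and> (\<forall>i\<in>{1..N-1}. xs ! (i - 1) \<noteq> xs ! (N - 1))"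

lemma noncapture_config_not_capture: "noncapture_config V N xs \<Longrightarrow> \<not> is_capture N (xs, k)"
  by (auto simp: noncapture_config_def is_capture_def)

lemma noncapture_config_nth: "noncapture_config V N xs \<Longrightarrow> i < N \<Longrightarrow> xs ! i \<in> V"
  by (auto simp: noncapture_config_def)

lemma noncapture_config_states: "noncapture_config V N xs \<Longrightarrow> k \<in> {1..N} \<Longrightarrow> (xs, k) \<in> states V N"
  by (auto simp: noncapture_config_def states_def)

lemma noncapture_config_of_state:
  "s \<in> states V N \<Longrightarrow> \<not> is_capture N s \<Longrightarrow> noncapture_config V N (fst s)"
  by (auto simp: states_def noncapture_config_def is_capture_def pos_def)

lemma captured_cops_cop_move:
  assumes "noncapture_config V N xs" and "i \<in> {1..N-1}"
  shows "captured_cops N (xs[i - 1 := v], k) = (if v = xs ! (N - 1) then {i} else {})"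
  using assms
  by (auto simp: noncapture_config_def captured_cops_def nth_list_update split: if_splits)

lemma captured_cops_robber_move:
  assumes "noncapture_config V N xs" and "j \<in> {1..N-1}"
    and "\<forall>i\<in>{1..N-1}. i \<noteq> j \<longrightarrow> xs ! (i - 1) \<noteq> xs ! (j - 1)"
  shows "captured_cops N (xs[N - 1 := xs ! (j - 1)], k) = {j}"
  using assms by (auto simp: noncapture_config_def captured_cops_def nth_list_update)

lemma noncapture_config_cop_move:
  assumes "noncapture_config V N xs" and "i \<in> {1..N-1}" and "v \<in> V" and "v \<noteq> xs ! (N - 1)"
  shows "noncapture_config V N (xs[i - 1 := v])"
  using assms set_update_subset_insert[of xs "i - 1" v]
  by (auto simp: noncapture_config_def nth_list_update split: if_splits)

lemma noncapture_config_robber_move: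
  assumes "noncapture_config V N xs" and "v \<in> V" and "\<forall>i\<in>{1..N-1}. xs ! (i - 1) \<noteq> v"
  shows "noncapture_config V N (xs[N - 1 := v])"
  using assms set_update_subset_insert[of xs "N - 1" v]
  by (auto simp: noncapture_config_def nth_list_update)

definition reachable_config :: "'v set \<Rightarrow> ('v \<Rightarrow> 'v \<Rightarrow> bool) \<Rightarrow> nat \<Rightarrow> 'v state \<Rightarrow> 'v list \<Rightarrow> bool" where
  "reachable_config V E N s0 xs \<longleftrightarrow>
     noncapture_config V N xs \<and> (\<forall>k\<in>{1..N}. (xs, k) \<in> reach_nc V E N s0)"

lemma reach_nc_pass:
  assumes "(xs, k) \<in> reach_nc V E N s0" and "k \<in> {1..N}" and "noncapture_config V N xs"
  shows "(xs, k mod N + 1) \<in> reach_nc V E N s0"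
proof -
  have "xs ! (k - 1) \<in> cnbhd V E (pos (xs, k) (mover (xs, k)))"
    using noncapture_config_nth[OF assms(3), of "k - 1"] assms(2) by (auto simp: cnbhd_def)
  from reach_nc.step[OF assms(1) noncapture_config_not_capture[OF assms(3)] this]
  show ?thesis by simp
qed

text \<open>Every token may stay put, so a noncapture position reachable with one token to move is
  reachable with any token to move.\<close>

lemma reachable_configI:
  assumes "(xs, k0) \<in> reach_nc V E N s0" and "k0 \<in> {1..N}" and "noncapture_config V N xs"
  shows "reachable_config V E N s0 xs"
proof -
  have N: "0 < N" using assms(2) by auto
  have rotated: "(xs, (k0 - 1 + d) mod N + 1) \<in> reach_nc V E N s0" for d
  proof (induction d)
    case 0
    have "(k0 - 1) mod N = k0 - 1" using assms(2) by auto
    then show ?case using assms(1,2) by simp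
  next
    case (Suc d)
    have "(xs, ((k0 - 1 + d) mod N + 1) mod N + 1) \<in> reach_nc V E N s0"
      using reach_nc_pass[OF Suc _ assms(3)] N by (simp add: Suc_leI)
    then show ?case by (simp add: mod_Suc_eq)
  qed
  have "(xs, k) \<in> reach_nc V E N s0" if k: "k \<in> {1..N}" for k
  proof -
    have "(k0 - 1 + (N + k - k0)) mod N = (N + (k - 1)) mod N"
      using k assms(2) by (simp add: algebra_simps)
    also have "\<dots> = k - 1" using k by (simp only: mod_add_self1) (auto intro: mod_less)
    finally show ?thesis using rotated[of "N + k - k0"] k by simp
  qed
  then show ?thesis using assms(3) by (simp add: reachable_config_def)
qed

lemma reachable_config_initial:
  assumes "s0 \<in> states V N" and "\<not> is_capture N s0"
  shows "reachable_config V E N s0 (fst s0)"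
  using reach_nc.start[of s0 V E N] assms noncapture_config_of_state[OF assms]
  by (intro reachable_configI[of _ "snd s0"]) (auto simp: states_def)

lemma reachable_config_move:
  assumes "reachable_config V E N s0 xs" and "k \<in> {1..N}" and "v \<in> cnbhd V E (xs ! (k - 1))"
    and "noncapture_config V N (xs[k - 1 := v])"
  shows "reachable_config V E N s0 (xs[k - 1 := v])"
proof -
  have "(xs, k) \<in> reach_nc V E N s0" and nc: "noncapture_config V N xs"
    using assms(1,2) by (auto simp: reachable_config_def)
  from reach_nc.step[OF this(1) noncapture_config_not_capture[OF nc]] assms(3)
  have "(xs[k - 1 := v], k mod N + 1) \<in> reach_nc V E N s0" by simp
  then show ?thesis
    using assms(2,4) by (intro reachable_configI[of _ "k mod N + 1"]) (auto simp: Suc_leI)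
qed

section \<open>Positions where a capture can be postponed\<close>

lemma reachable_config_cop_walk:
  assumes "simple_graph V E" and "E\<^sup>*\<^sup>* a c" and i: "i \<in> {1..N-1}"
  shows "reachable_config V E N s0 xs \<Longrightarrow> xs ! (i - 1) = a \<Longrightarrow> xs ! (N - 1) = c
    \<Longrightarrow> \<exists>b. E b c \<and> reachable_config V E N s0 (xs[i - 1 := b])"
  using assms(2)
proof (induction arbitrary: xs rule: converse_rtranclp_induct)
  case base
  then show ?case using i by (auto simp: reachable_config_def noncapture_config_def)
next
  case (step a a')
  show ?case
  proof (cases "a' = c")
    case True
    then show ?thesis using step by (metis list_update_id)
  next
    case False
    have nc: "noncapture_config V N xs" using step.prems(1) by (simp add: reachable_config_def)
    have a': "a' \<in> V" using assms(1) step.hyps(1) by (simp add: simple_graph_def)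
    have iN: "i - 1 < N" "i - 1 \<noteq> N - 1" using i by auto
    have "reachable_config V E N s0 (xs[i - 1 := a'])"
      using step.prems step.hyps(1) a' False i
      by (intro reachable_config_move noncapture_config_cop_move[OF nc]) (auto simp: cnbhd_def)
    moreover have "xs[i - 1 := a'] ! (i - 1) = a'" and "xs[i - 1 := a'] ! (N - 1) = c"
      using nc iN step.prems(3) by (auto simp: noncapture_config_def)
    ultimately show ?thesis using step.IH by fastforce
  qed
qed

lemma rtranclp_enters_set:
  "E\<^sup>*\<^sup>* x y \<Longrightarrow> x \<notin> S \<Longrightarrow> y \<in> S \<Longrightarrow> \<exists>u v. E u v \<and> u \<notin> S \<and> v \<in> S"
  by (induction rule: rtranclp_induct) blast+

lemma exists_other_neighbour:
  assumes sg: "simple_graph V E" and "connected_graph V E" and "card V \<ge> 3"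
    and bc: "E b c" and only: "\<forall>w. E b w \<longrightarrow> w = c"
  shows "\<exists>w. E c w \<and> w \<noteq> b"
proof -
  obtain w where w: "w \<in> V" "w \<notin> {b, c}"
  proof (rule ccontr)
    assume "\<not> thesis"
    then have "V \<subseteq> {b, c}" using that by blast
    then have "card V \<le> 2"
      using card_mono[of "{b, c}" V] card_insert_le_m1[of 2 "{c}" b] by force
    then show False using assms(3) by simp
  qed
  have "E\<^sup>*\<^sup>* w b" using assms(2) w sg bc by (simp add: connected_graph_def simple_graph_def)
  then obtain u v where uv: "E u v" "u \<notin> {b, c}" "v \<in> {b, c}"
    using rtranclp_enters_set[of E w b "{b, c}"] w by auto
  then show ?thesis using sg only unfolding simple_graph_def by blast
qed

text \<open>The two ways of postponing a capture by cop \<open>j\<close> beyond its turn so that a single cop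
  other than \<open>C\<^sub>1\<close> captures later.\<close>

definition capture_delayable :: "('v \<Rightarrow> 'v \<Rightarrow> bool) \<Rightarrow> nat \<Rightarrow> 'v list \<Rightarrow> nat \<Rightarrow> bool" where
  "capture_delayable E N xs j \<longleftrightarrow>
     (\<exists>i\<in>{j<..N-1}. E (xs ! (i - 1)) (xs ! (N - 1)))
     \<or> (\<forall>i\<in>{1..N-1}. i \<noteq> j \<longrightarrow> xs ! (i - 1) \<noteq> xs ! (j - 1))"

lemma capture_delayable_after_cop_one_leaves:
  assumes sg: "simple_graph V E" and R: "reachable_config V E N s0 xs" and N: "N \<ge> 3"
    and shared: "xs ! 0 = xs ! 1" and adj: "E (xs ! 1) (xs ! (N - 1))"
    and w: "E (xs ! 0) w" "w \<noteq> xs ! (N - 1)"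
    and no_later: "\<forall>i\<in>{3..N-1}. \<not> E (xs ! (i - 1)) (xs ! (N - 1))"
  shows "reachable_config V E N s0 (xs[0 := w]) \<and> E (xs[0 := w] ! 1) (xs[0 := w] ! (N - 1))
    \<and> capture_delayable E N (xs[0 := w]) 2"
proof (intro conjI)
  have nc: "noncapture_config V N xs" using R by (simp add: reachable_config_def)
  have "w \<in> V" using sg w by (simp add: simple_graph_def)
  then show "reachable_config V E N s0 (xs[0 := w])"
    using reachable_config_move[OF R, of 1 w] noncapture_config_cop_move[OF nc, of 1 w] w N
    by (auto simp: cnbhd_def)
  show "E (xs[0 := w] ! 1) (xs[0 := w] ! (N - 1))" using adj N by simp
  have "w \<noteq> xs ! 1" using sg w shared by (auto simp: simple_graph_def)
  moreover have "xs ! (i - 1) \<noteq> xs ! 1" if "i \<in> {3..N-1}" for i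
    using no_later that adj by force
  moreover have "length xs = N" using R by (simp add: reachable_config_def noncapture_config_def)
  ultimately show "capture_delayable E N (xs[0 := w]) 2"
    unfolding capture_delayable_def using N
    by (intro disjI2 ballI impI) (auto simp: nth_list_update split: if_splits)
qed

lemma capture_delayable_after_robber_flees:
  assumes sg: "simple_graph V E" and R: "reachable_config V E N s0 xs" and N: "N \<ge> 3"
    and shared: "xs ! 0 = xs ! 1" and adj: "E (xs ! 1) (xs ! (N - 1))"
    and w: "E (xs ! (N - 1)) w" "w \<noteq> xs ! 1"
    and no_later: "\<forall>i\<in>{3..N-1}. \<not> E (xs ! (i - 1)) (xs ! (N - 1))"
  defines "ys \<equiv> (xs[N - 1 := w])[1 := xs ! (N - 1)]"
  shows "reachable_config V E N s0 ys \<and> E (ys ! 1) (ys ! (N - 1)) \<and> capture_delayable E N ys 2"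
proof (intro conjI)
  have nc: "noncapture_config V N xs" using R by (simp add: reachable_config_def)
  have L: "length xs = N" using nc by (simp add: noncapture_config_def)
  have Esym: "E x y \<Longrightarrow> E y x" for x y using sg by (simp add: simple_graph_def)
  have V: "w \<in> V" "xs ! (N - 1) \<in> V" using sg w by (auto simp: simple_graph_def)
  have w_ne: "w \<noteq> xs ! (N - 1)" using sg w by (auto simp: simple_graph_def)
  have free: "\<forall>i\<in>{1..N-1}. xs ! (i - 1) \<noteq> w"
  proof
    fix i assume i: "i \<in> {1..N-1}"
    show "xs ! (i - 1) \<noteq> w"
    proof (cases "i \<le> 2")
      case True
      then have "i = 1 \<or> i = 2" using i by auto
      then show ?thesis using w shared by auto
    next
      case False
      then have "\<not> E (xs ! (i - 1)) (xs ! (N - 1))" using no_later i by auto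
      then show ?thesis using w Esym by blast
    qed
  qed
  have nc1: "noncapture_config V N (xs[N - 1 := w])"
    by (rule noncapture_config_robber_move[OF nc V(1) free])
  have R1: "reachable_config V E N s0 (xs[N - 1 := w])"
    using reachable_config_move[OF R _ _ nc1] w V N by (auto simp: cnbhd_def)
  have "noncapture_config V N ys"
    using noncapture_config_cop_move[OF nc1, of 2 "xs ! (N - 1)"] V w_ne N L by (simp add: ys_def)
  then show "reachable_config V E N s0 ys"
    using reachable_config_move[OF R1, of 2 "xs ! (N - 1)"] adj V N
    by (auto simp: cnbhd_def ys_def)
  show "E (ys ! 1) (ys ! (N - 1))" using w N L by (simp add: ys_def)
  show "capture_delayable E N ys 2"
    using nc N L unfolding capture_delayable_def ys_def
    by (intro disjI2 ballI impI) (auto simp: noncapture_config_def nth_list_update)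
qed

lemma capture_delayable_config_from_adjacent:
  assumes sg: "simple_graph V E" and cn: "connected_graph V E" and "card V \<ge> 3" and N: "N \<ge> 3"
    and R: "reachable_config V E N s0 xs" and adj: "E (xs ! 1) (xs ! (N - 1))"
  shows "\<exists>ys. reachable_config V E N s0 ys \<and> E (ys ! 1) (ys ! (N - 1)) \<and> capture_delayable E N ys 2"
proof (cases "capture_delayable E N xs 2")
  case True
  then show ?thesis using R adj by auto
next
  case False
  then have no_later: "\<forall>i\<in>{3..N-1}. \<not> E (xs ! (i - 1)) (xs ! (N - 1))"
    and "\<exists>i\<in>{1..N-1}. i \<noteq> 2 \<and> xs ! (i - 1) = xs ! (2 - 1)"
    by (auto simp: capture_delayable_def)
  then obtain i where i: "i \<in> {1..N-1}" "i \<noteq> 2" "xs ! (i - 1) = xs ! 1" by auto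
  have "i = 1"
  proof (rule ccontr)
    assume "i \<noteq> 1"
    then have "i \<in> {3..N-1}" using i by auto
    then have "\<not> E (xs ! (i - 1)) (xs ! (N - 1))" using no_later by blast
    then show False using adj i(3) by metis
  qed
  then have shared: "xs ! 0 = xs ! 1" using i by simp
  show ?thesis
  proof (cases "\<exists>w. E (xs ! 1) w \<and> w \<noteq> xs ! (N - 1)")
    case True
    then obtain w where "E (xs ! 0) w" "w \<noteq> xs ! (N - 1)" using shared by auto
    then show ?thesis
      using capture_delayable_after_cop_one_leaves[OF sg R N shared adj _ _ no_later] by blast
  next
    case False
    then obtain w where "E (xs ! (N - 1)) w" "w \<noteq> xs ! 1"
      using exists_other_neighbour[OF sg cn assms(3) adj] by blast
    then show ?thesis
      using capture_delayable_after_robber_flees[OF sg R N shared adj _ _ no_later] by blast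
  qed
qed

lemma capture_delayable_config_exists:
  assumes sg: "simple_graph V E" and cn: "connected_graph V E" and "card V \<ge> 3" and N: "N \<ge> 3"
    and "s0 \<in> states V N" and "\<not> is_capture N s0"
  shows "\<exists>xs. reachable_config V E N s0 xs \<and> E (xs ! 1) (xs ! (N - 1)) \<and> capture_delayable E N xs 2"
proof -
  define xs0 where "xs0 = fst s0"
  have R0: "reachable_config V E N s0 xs0"
    unfolding xs0_def using reachable_config_initial assms(5,6) .
  then have "xs0 ! 1 \<in> V" "xs0 ! (N - 1) \<in> V"
    using N by (auto simp: reachable_config_def intro: noncapture_config_nth)
  then have path: "E\<^sup>*\<^sup>* (xs0 ! (2 - 1)) (xs0 ! (N - 1))" using cn by (simp add: connected_graph_def)
  obtain b where "E b (xs0 ! (N - 1))" and R1: "reachable_config V E N s0 (xs0[1 := b])"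
    using reachable_config_cop_walk[OF sg path _ R0 refl refl] N by fastforce
  moreover have "length xs0 = N" using R0 by (simp add: reachable_config_def noncapture_config_def)
  ultimately have "E (xs0[1 := b] ! 1) (xs0[1 := b] ! (N - 1))" using N by simp
  with R1 show ?thesis by (rule capture_delayable_config_from_adjacent[OF sg cn assms(3) N])
qed

section \<open>Discounted payoffs of simple plays\<close>

definition approach :: "'v set \<Rightarrow> ('v \<Rightarrow> 'v \<Rightarrow> bool) \<Rightarrow> nat \<Rightarrow> nat \<Rightarrow> 'v strat" where
  "approach V E n t s = (if pos s t \<in> cnbhd V E (pos s n) then pos s t else pos s n)"

lemma legal_strat_stay: "n \<in> {1..N} \<Longrightarrow> legal_strat V E N n (\<lambda>s. pos s n)"
  using pos_in_vertices by (fastforce simp: legal_strat_def cnbhd_def)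

lemma legal_strat_approach: "n \<in> {1..N} \<Longrightarrow> legal_strat V E N n (approach V E n t)"
  using pos_in_vertices by (fastforce simp: legal_strat_def cnbhd_def approach_def)

lemma payoff_eq_first_capture:
  assumes "is_capture N (play N \<pi> s T)" and "\<And>t. t < T \<Longrightarrow> \<not> is_capture N (play N \<pi> s t)"
  shows "payoff N \<gamma> \<epsilon> m \<pi> s = \<gamma> ^ T * capture_reward N \<epsilon> m (play N \<pi> s T)"
proof -
  have "(LEAST t. is_capture N (play N \<pi> s t)) = T"
    by (rule Least_equality) (use assms not_le in blast)+
  then show ?thesis using assms(1) by (auto simp: payoff_def Let_def)
qed

lemma capture_reward_robber: "capture_reward N \<epsilon> N s = -1"
  by (simp add: capture_reward_def)

lemma capture_reward_single_capture:
  assumes "captured_cops N s = {i}" and "m \<noteq> i" and "m \<noteq> N" and "N \<ge> 3"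
  shows "capture_reward N \<epsilon> m s = \<epsilon> / real (N - 2)"
proof -
  have "N - 1 \<noteq> 1" using assms(4) by simp
  then show ?thesis using assms by (simp add: capture_reward_def)
qed

lemma robber_payoff_ge:
  assumes "\<not> is_capture N (play N \<pi> s 0)" and "\<not> is_capture N (play N \<pi> s 1)"
    and "0 \<le> \<gamma>" and "\<gamma> \<le> 1"
  shows "- (\<gamma> ^ 2) \<le> payoff N \<gamma> \<epsilon> N \<pi> s"
proof (cases "\<exists>t. is_capture N (play N \<pi> s t)")
  case True
  define T where "T = (LEAST t. is_capture N (play N \<pi> s t))"
  have "is_capture N (play N \<pi> s T)" unfolding T_def using True by (rule LeastI_ex)
  then have "T \<noteq> 0" and "T \<noteq> 1" using assms(1,2) by metis+
  then have "2 \<le> T" by simp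
  then have "\<gamma> ^ T \<le> \<gamma> ^ 2" using assms(3,4) by (rule power_decreasing)
  then show ?thesis
    using True by (simp add: payoff_def T_def[symmetric] capture_reward_robber)
next
  case False
  then show ?thesis by (simp add: payoff_def)
qed

lemma play_while_staying:
  assumes "1 \<le> j" and "j + t \<le> N" and "\<forall>n\<in>{j..<j+t}. \<rho> n (xs, n) = xs ! (n - 1)"
  shows "play N \<rho> (xs, j) t = (xs, j + t)"
  using assms(2,3)
proof (induction t)
  case (Suc t)
  then have "play N \<rho> (xs, j) t = (xs, j + t)" and "\<rho> (j + t) (xs, j + t) = xs ! (j + t - 1)"
    by auto
  then show ?case using Suc.prems assms(1) by (simp add: Let_def)
qed simp

lemma payoff_capture_after_staying:
  assumes "1 \<le> j" and "j \<le> k" and "k \<le> N" and "\<forall>n\<in>{j..<k}. \<rho> n (xs, n) = xs ! (n - 1)"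
    and "\<And>n. \<not> is_capture N (xs, n)"
    and capture: "is_capture N (xs[k - 1 := \<rho> k (xs, k)], k mod N + 1)"
  shows "payoff N \<gamma> \<epsilon> m \<rho> (xs, j)
    = \<gamma> ^ Suc (k - j) * capture_reward N \<epsilon> m (xs[k - 1 := \<rho> k (xs, k)], k mod N + 1)"
proof -
  have stay: "play N \<rho> (xs, j) t = (xs, j + t)" if "t \<le> k - j" for t
    using assms(1-4) that by (intro play_while_staying) auto
  then have last: "play N \<rho> (xs, j) (Suc (k - j)) = (xs[k - 1 := \<rho> k (xs, k)], k mod N + 1)"
    using assms(2) by (simp add: Let_def)
  have "payoff N \<gamma> \<epsilon> m \<rho> (xs, j)
    = \<gamma> ^ Suc (k - j) * capture_reward N \<epsilon> m (play N \<rho> (xs, j) (Suc (k - j)))"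
  proof (rule payoff_eq_first_capture)
    show "is_capture N (play N \<rho> (xs, j) (Suc (k - j)))" using capture by (simp only: last)
    show "\<not> is_capture N (play N \<rho> (xs, j) t)" if "t < Suc (k - j)" for t
      using stay[of t] assms(5) that by simp
  qed
  then show ?thesis by (simp only: last)
qed

corollary payoff_single_capture_after_staying:
  assumes "1 \<le> j" and "j \<le> k" and "k \<le> N" and "\<forall>n\<in>{j..<k}. \<rho> n (xs, n) = xs ! (n - 1)"
    and "\<And>n. \<not> is_capture N (xs, n)"
    and single: "captured_cops N (xs[k - 1 := \<rho> k (xs, k)], k mod N + 1) = {i}"
    and "m \<noteq> i" and "m \<noteq> N" and "N \<ge> 3"
  shows "payoff N \<gamma> \<epsilon> m \<rho> (xs, j) = \<gamma> ^ Suc (k - j) * (\<epsilon> / real (N - 2))"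
proof -
  have "is_capture N (xs[k - 1 := \<rho> k (xs, k)], k mod N + 1)"
    using single by (simp add: is_capture_iff_captured_cops)
  with assms(1-5) have "payoff N \<gamma> \<epsilon> m \<rho> (xs, j)
    = \<gamma> ^ Suc (k - j) * capture_reward N \<epsilon> m (xs[k - 1 := \<rho> k (xs, k)], k mod N + 1)"
    by (rule payoff_capture_after_staying)
  then show ?thesis using capture_reward_single_capture[OF single assms(7-9)] by simp
qed

section \<open>Optimal play in such a position\<close>

lemma CR_optimal_cop_captures:
  assumes opt: "optimal_pair V E N \<gamma> \<epsilon> N \<pi>" and j: "j \<in> {1..N-1}"
    and nc: "noncapture_config V N xs" and adj: "xs ! (N - 1) \<in> cnbhd V E (xs ! (j - 1))"
    and "0 < \<gamma>" and "\<gamma> < 1"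
  shows "\<pi> j (xs, j) = xs ! (N - 1)"
proof (rule ccontr)
  assume miss: "\<pi> j (xs, j) \<noteq> xs ! (N - 1)"
  have "j \<le> N" using j by auto
  define \<rho> where "\<rho> = \<pi>(j := approach V E j N)"
  have "legal_profile V E N \<pi>" using opt by (simp add: optimal_pair_def)
  then have "legal_profile V E N \<rho>"
    using legal_strat_approach[of j N] j by (auto simp: legal_profile_def \<rho>_def)
  then have "payoff N \<gamma> \<epsilon> N \<pi> (xs, j) \<le> payoff N \<gamma> \<epsilon> N (\<rho>(N := \<pi> N)) (xs, j)"
    using opt noncapture_config_states[OF nc] noncapture_config_not_capture[OF nc] j
    by (auto simp: optimal_pair_def)
  also have "\<rho>(N := \<pi> N) = \<rho>" using j by (auto simp: \<rho>_def fun_eq_iff)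
  also have "payoff N \<gamma> \<epsilon> N \<rho> (xs, j) = - \<gamma>"
  proof -
    have "\<rho> j (xs, j) = xs ! (N - 1)" using adj by (simp add: \<rho>_def approach_def)
    then show ?thesis
      using payoff_capture_after_staying[of j j N \<rho> xs, OF _ _ _ _ noncapture_config_not_capture[OF nc]]
        captured_cops_cop_move[OF nc j] j \<open>j \<le> N\<close>
      by (simp add: is_capture_iff_captured_cops capture_reward_robber)
  qed
  finally have "payoff N \<gamma> \<epsilon> N \<pi> (xs, j) \<le> - \<gamma>" .
  moreover have "- (\<gamma> ^ 2) \<le> payoff N \<gamma> \<epsilon> N \<pi> (xs, j)"
    using noncapture_config_not_capture[OF nc] captured_cops_cop_move[OF nc j] miss assms(5,6)
    by (intro robber_payoff_ge) (auto simp: is_capture_iff_captured_cops)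
  moreover have "\<gamma> ^ 2 < \<gamma>" using assms(5,6) by (simp add: power2_eq_square)
  ultimately show False by simp
qed

lemma delaying_profile_exists:
  assumes sg: "simple_graph V E" and nc: "noncapture_config V N xs" and j: "j \<in> {2..N-1}"
    and adj: "E (xs ! (j - 1)) (xs ! (N - 1))" and "capture_delayable E N xs j"
  shows "\<exists>\<rho> k i. legal_profile V E N \<rho> \<and> j < k \<and> k \<le> N \<and> (\<forall>n\<in>{j..<k}. \<rho> n (xs, n) = xs ! (n - 1))
    \<and> captured_cops N (xs[k - 1 := \<rho> k (xs, k)], k mod N + 1) = {i} \<and> i \<noteq> 1"
  using assms(5) unfolding capture_delayable_def
proof (elim disjE bexE)
  fix i assume i: "i \<in> {j<..N-1}" and "E (xs ! (i - 1)) (xs ! (N - 1))"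
  define \<rho> where "\<rho> = (\<lambda>n s. pos s n)(i := approach V E i N)"
  have "xs ! (N - 1) \<in> V" using noncapture_config_nth[OF nc, of "N - 1"] j by auto
  then have "\<rho> i (xs, i) = xs ! (N - 1)"
    using \<open>E (xs ! (i - 1)) (xs ! (N - 1))\<close> by (simp add: \<rho>_def approach_def cnbhd_def)
  moreover have "legal_profile V E N \<rho>"
    by (auto simp: legal_profile_def \<rho>_def intro: legal_strat_stay legal_strat_approach)
  ultimately show ?thesis
    using captured_cops_cop_move[OF nc, of i] i j
    by (intro exI[of _ \<rho>] exI[of _ i]) (auto simp: \<rho>_def)
next
  assume alone: "\<forall>i\<in>{1..N-1}. i \<noteq> j \<longrightarrow> xs ! (i - 1) \<noteq> xs ! (j - 1)"
  define \<rho> where "\<rho> = (\<lambda>n s. pos s n)(N := approach V E N j)"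
  have "xs ! (j - 1) \<in> V" using noncapture_config_nth[OF nc, of "j - 1"] j by auto
  then have "\<rho> N (xs, N) = xs ! (j - 1)"
    using adj sg by (auto simp: \<rho>_def approach_def cnbhd_def simple_graph_def)
  moreover have "legal_profile V E N \<rho>"
    by (auto simp: legal_profile_def \<rho>_def intro: legal_strat_stay legal_strat_approach)
  ultimately show ?thesis
    using captured_cops_robber_move[OF nc _ alone] j
    by (intro exI[of _ \<rho>] exI[of _ N] exI[of _ j]) (auto simp: \<rho>_def)
qed

lemma cop_one_opponent_delays_capture:
  assumes sg: "simple_graph V E" and opt: "optimal_pair V E N \<gamma> \<epsilon> 1 \<pi>" and N: "N \<ge> 3"
    and j: "j \<in> {2..N-1}" and nc: "noncapture_config V N xs"
    and adj: "E (xs ! (j - 1)) (xs ! (N - 1))" and delayable: "capture_delayable E N xs j"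
    and "0 < \<gamma>" and "\<gamma> < 1" and "0 < \<epsilon>"
  shows "\<pi> j (xs, j) \<noteq> xs ! (N - 1)"
proof
  assume capture: "\<pi> j (xs, j) = xs ! (N - 1)"
  define r where "r = \<epsilon> / real (N - 2)"
  have "r > 0" using assms(10) N by (simp add: r_def)
  have ncs: "\<And>n. \<not> is_capture N (xs, n)" using noncapture_config_not_capture[OF nc] .
  obtain \<rho> k i where legal: "legal_profile V E N \<rho>" and k: "j < k" "k \<le> N"
    and stay: "\<forall>n\<in>{j..<k}. \<rho> n (xs, n) = xs ! (n - 1)"
    and single: "captured_cops N (xs[k - 1 := \<rho> k (xs, k)], k mod N + 1) = {i}" and "i \<noteq> 1"
    using delaying_profile_exists[OF sg nc j adj delayable] by blast
  have "captured_cops N (xs[j - 1 := \<pi> j (xs, j)], j mod N + 1) = {j}"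
    using captured_cops_cop_move[OF nc, of j] capture j by simp
  moreover have "1 \<le> j" "j \<le> N" "1 \<noteq> j" using j by auto
  ultimately have "payoff N \<gamma> \<epsilon> 1 \<pi> (xs, j) = \<gamma> * r"
    using payoff_single_capture_after_staying[of j j N \<pi> xs, OF _ _ _ _ ncs] N
    by (simp add: r_def)
  then have "\<gamma> * r = payoff N \<gamma> \<epsilon> 1 \<pi> (xs, j)" ..
  also have "\<dots> \<le> payoff N \<gamma> \<epsilon> 1 (\<rho>(1 := \<pi> 1)) (xs, j)"
    using opt legal noncapture_config_states[OF nc] ncs j by (auto simp: optimal_pair_def)
  also have "\<dots> = \<gamma> ^ Suc (k - j) * r"
    using payoff_single_capture_after_staying[of j k N "\<rho>(1 := \<pi> 1)" xs, OF _ _ _ _ ncs]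
      stay single \<open>i \<noteq> 1\<close> j k N
    by (simp add: r_def)
  finally have "\<gamma> * r \<le> \<gamma> ^ Suc (k - j) * r" .
  moreover have "\<gamma> ^ Suc (k - j) < \<gamma>"
    using power_strict_decreasing[of 1 "Suc (k - j)" \<gamma>] k assms(8,9) by simp
  ultimately show False using \<open>r > 0\<close> mult_right_le_imp_le[of \<gamma> r "\<gamma> ^ Suc (k - j)"] by linarith
qed

theorem mainTheorem4:
  fixes V :: "'v set" and E :: "'v \<Rightarrow> 'v \<Rightarrow> bool" and N :: nat
    and \<gamma> \<epsilon> :: real and s0 :: "'v state" and \<phi> :: "nat \<Rightarrow> nat \<Rightarrow> 'v strat"
  assumes "simple_graph V E" and "connected_graph V E" and "card V \<ge> 3"
    and "N \<ge> 3"
    and "0 < \<epsilon>" and "\<epsilon> \<le> 1 / real (N - 1)"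
    and "s0 \<in> states V N" and "\<not> is_capture N s0"
    and "0 < \<gamma>" and "\<gamma> < 1"
    and "\<forall>m\<in>{1..N}. optimal_pair V E N \<gamma> \<epsilon> m (\<lambda>n. \<phi> n m)"
  shows "\<not> trigger_positional V E N \<gamma> \<epsilon> s0 \<phi>"
proof
  assume "trigger_positional V E N \<gamma> \<epsilon> s0 \<phi>"
  obtain xs where R: "reachable_config V E N s0 xs" and adj: "E (xs ! 1) (xs ! (N - 1))"
    and delayable: "capture_delayable E N xs 2"
    using capture_delayable_config_exists[OF assms(1-4,7,8)] by blast
  have nc: "noncapture_config V N xs" and "(xs, 2) \<in> reach_nc V E N s0"
    using R assms(4) by (auto simp: reachable_config_def)
  then obtain \<sigma> where "\<sigma> \<in> CR_optimal V E N \<gamma> \<epsilon> 2" and "\<phi> 2 1 (xs, 2) = \<sigma> (xs, 2)"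
    using \<open>trigger_positional V E N \<gamma> \<epsilon> s0 \<phi>\<close> assms(4) noncapture_config_not_capture[OF nc]
    unfolding trigger_positional_def by fastforce
  then obtain \<pi> where "optimal_pair V E N \<gamma> \<epsilon> N \<pi>" and "\<phi> 2 1 (xs, 2) = \<pi> 2 (xs, 2)"
    unfolding CR_optimal_def by blast
  moreover have "xs ! (N - 1) \<in> cnbhd V E (xs ! 1)"
    using adj assms(1) by (auto simp: cnbhd_def simple_graph_def)
  ultimately have "\<phi> 2 1 (xs, 2) = xs ! (N - 1)"
    using CR_optimal_cop_captures[OF _ _ nc _ assms(9,10), of E \<epsilon> \<pi> 2] assms(4) by simp
  moreover have "\<phi> 2 1 (xs, 2) \<noteq> xs ! (N - 1)"
    using cop_one_opponent_delays_capture[OF assms(1) _ assms(4) _ nc _ delayable assms(9,10,5)]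
      assms(4,11) adj by fastforce
  ultimately show False by simp
qed

end
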